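(* Let $\mathfrak B,\mathfrak D^+,\mathfrak D^-$ be Banach spaces and let $I^+\colon\mathfrak D^+\to\mathfrak B$, $I^-\colon\mathfrak B\to\mathfrak D^-$ be injective continuous linear embeddings with dense ranges. Let $T\colon\mathfrak D^+\to\mathfrak D^-$ be a bounded linear operator, and let $T^\bullet=(I^-)^{-1}T(I^+)^{-1}$ be the operator in $\mathfrak B$ with domain $\{x\in I^+(\mathfrak D^+)\;:\;T(I^+)^{-1}x\in I^-(\mathfrak B)\}$, acting by $T^\bullet x=(I^-)^{-1}T(I^+)^{-1}x$. Suppose that for some $A\in\mathcal B(\mathfrak B)$ the operator $T-I^-AI^+$ has a bounded inverse. Then for every $\lambda$ in the resolvent set $\varrho(T^\bullet)$ the operator $T-\lambda I^-I^+\colon\mathfrak D^+\to\mathfrak D^-$ also has a bounded inverse.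
   Context: "Has a bounded inverse" means: the operator is a bijection of $\mathfrak D^+$ onto $\mathfrak D^-$ with bounded inverse. *)

theory Defs
  imports "HOL-Analysis.Analysis"
begin

class complex_vector = real_vector +
  fixes scaleC :: "complex \<Rightarrow> 'a \<Rightarrow> 'a" (infixr \<open>*\<^sub>C\<close> 75)
  assumes scaleC_add_right: "a *\<^sub>C (x + y) = a *\<^sub>C x + a *\<^sub>C y"
    and scaleC_add_left: "(a + b) *\<^sub>C x = a *\<^sub>C x + b *\<^sub>C x"
    and scaleC_scaleC: "a *\<^sub>C (b *\<^sub>C x) = (a * b) *\<^sub>C x"
    and scaleC_one: "1 *\<^sub>C x = x"
    and scaleR_scaleC: "scaleR r x = (complex_of_real r) *\<^sub>C x"

class complex_normed_vector = complex_vector + real_normed_vector +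
  assumes norm_scaleC: "norm (a *\<^sub>C x) = cmod a * norm x"

definition bounded_clinear :: "('a::complex_normed_vector \<Rightarrow> 'b::complex_normed_vector) \<Rightarrow> bool" where
  "bounded_clinear f \<longleftrightarrow> bounded_linear f \<and> (\<forall>c x. f (c *\<^sub>C x) = c *\<^sub>C f x)"

definition has_bounded_inverse :: "('a::complex_normed_vector \<Rightarrow> 'b::complex_normed_vector) \<Rightarrow> bool" where
  "has_bounded_inverse S \<longleftrightarrow> bij S \<and> bounded_clinear (inv S)"

definition resolvent_set :: "'a::complex_normed_vector set \<Rightarrow> ('a \<Rightarrow> 'a) \<Rightarrow> complex set" where
  "resolvent_set D S = {z. bij_betw (\<lambda>x. S x - z *\<^sub>C x) D UNIV \<and>
      bounded_clinear (the_inv_into D (\<lambda>x. S x - z *\<^sub>C x))}"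

definition bullet_dom :: "('p \<Rightarrow> 'b) \<Rightarrow> ('b \<Rightarrow> 'm) \<Rightarrow> ('p \<Rightarrow> 'm) \<Rightarrow> 'b set" where
  "bullet_dom Jp Jm T = {x \<in> range Jp. T (inv Jp x) \<in> range Jm}"

definition bullet_op :: "('p \<Rightarrow> 'b) \<Rightarrow> ('b \<Rightarrow> 'm) \<Rightarrow> ('p \<Rightarrow> 'm) \<Rightarrow> 'b \<Rightarrow> 'b" where
  "bullet_op Jp Jm T x = inv Jm (T (inv Jp x))"

end

theory Submission
  imports Defs
begin

text \<open>Write \<open>R = T - I\<^sup>- A I\<^sup>+\<close> and \<open>K = \<lambda> - A\<close>, so that \<open>T - \<lambda> I\<^sup>- I\<^sup>+ = R - I\<^sup>- K I\<^sup>+\<close> and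
  \<open>T\<^sup>\<bullet> - \<lambda> = (I\<^sup>-)\<^sup>-\<^sup>1 R (I\<^sup>+)\<^sup>-\<^sup>1 - K\<close> on the domain of \<open>T\<^sup>\<bullet>\<close>. If \<open>R\<close> has a bounded inverse and
  \<open>G = (T\<^sup>\<bullet> - \<lambda>)\<^sup>-\<^sup>1\<close> is bounded, then \<open>T - \<lambda> I\<^sup>- I\<^sup>+\<close> is inverted by the Woodbury-type formula
  \<open>R\<^sup>-\<^sup>1 + R\<^sup>-\<^sup>1 I\<^sup>- K (1 + G K) I\<^sup>+ R\<^sup>-\<^sup>1\<close>, a composition of bounded operators.\<close>

lemma scaleC_diff_right: "(a::complex) *\<^sub>C ((x::'a::complex_vector) - y) = a *\<^sub>C x - a *\<^sub>C y"
proof -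
  have "a *\<^sub>C (x - y) + a *\<^sub>C y = a *\<^sub>C x"
    by (metis scaleC_add_right diff_add_cancel)
  then show ?thesis
    by (simp add: eq_diff_eq)
qed

lemma scaleC_scaleR_commute: "(a::complex) *\<^sub>C (r *\<^sub>R (x::'a::complex_vector)) = r *\<^sub>R (a *\<^sub>C x)"
  by (simp add: scaleR_scaleC scaleC_scaleC mult.commute)

lemma bounded_clinear_imp_bounded_linear: "bounded_clinear f \<Longrightarrow> bounded_linear f"
  by (simp add: bounded_clinear_def)

lemma bounded_clinear_scaleC_commute: "bounded_clinear f \<Longrightarrow> f (c *\<^sub>C x) = c *\<^sub>C f x"
  by (simp add: bounded_clinear_def)

lemma bounded_clinear_ident: "bounded_clinear (\<lambda>x. x)"
  by (simp add: bounded_clinear_def bounded_linear_ident)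

lemma bounded_clinear_compose:
  "bounded_clinear f \<Longrightarrow> bounded_clinear g \<Longrightarrow> bounded_clinear (\<lambda>x. f (g x))"
  unfolding bounded_clinear_def using bounded_linear_compose by auto

lemma bounded_clinear_add:
  "bounded_clinear f \<Longrightarrow> bounded_clinear g \<Longrightarrow> bounded_clinear (\<lambda>x. f x + g x)"
  unfolding bounded_clinear_def using bounded_linear_add by (auto simp: scaleC_add_right)

lemma bounded_clinear_diff:
  "bounded_clinear f \<Longrightarrow> bounded_clinear g \<Longrightarrow> bounded_clinear (\<lambda>x. f x - g x)"
  unfolding bounded_clinear_def using bounded_linear_sub by (auto simp: scaleC_diff_right)

lemma bounded_clinear_scaleC: "bounded_clinear (\<lambda>x::'a::complex_normed_vector. c *\<^sub>C x)"
  unfolding bounded_clinear_def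
proof (intro conjI allI)
  show "bounded_linear (\<lambda>x::'a. c *\<^sub>C x)"
    by (rule bounded_linear_intro[where K = "cmod c"])
      (simp_all add: scaleC_add_right scaleC_scaleR_commute norm_scaleC mult.commute)
  show "c *\<^sub>C (a *\<^sub>C x) = a *\<^sub>C (c *\<^sub>C x)" for a and x :: 'a
    by (simp add: scaleC_scaleC mult.commute)
qed

lemma has_bounded_inverseI:
  assumes "inj S" and "\<And>y. S (F y) = y" and "bounded_clinear F"
  shows "has_bounded_inverse S"
proof -
  have "surj S"
    using assms(2) by (metis surjI)
  moreover have "inv S = F"
    using assms(1,2) by (metis inv_f_f ext)
  ultimately show ?thesis
    using assms(1,3) by (simp add: has_bounded_inverse_def bij_def)
qed

text \<open>The hypothesis on \<open>G\<close> says that \<open>G\<close> inverts \<open>(J\<^sub>m)\<^sup>-\<^sup>1 R (J\<^sub>p)\<^sup>-\<^sup>1 - K\<close> on its natural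
  domain inside the range of \<open>J\<^sub>p\<close>.\<close>

lemma has_bounded_inverse_diff_factored:
  fixes R :: "'p::complex_normed_vector \<Rightarrow> 'm::complex_normed_vector"
    and Jp :: "'p \<Rightarrow> 'b::complex_normed_vector" and Jm :: "'b \<Rightarrow> 'm" and K G :: "'b \<Rightarrow> 'b"
  assumes R: "has_bounded_inverse R" "bounded_clinear R"
    and bounded: "bounded_clinear Jp" "bounded_clinear Jm" "bounded_clinear K" "bounded_clinear G"
    and G_range: "\<And>v. G v \<in> range Jp"
    and G_iff: "\<And>v p. G v = Jp p \<longleftrightarrow> R p = Jm (v + K (Jp p))"
  shows "has_bounded_inverse (\<lambda>x. R x - Jm (K (Jp x)))"
proof -
  define S where "S = (\<lambda>x. R x - Jm (K (Jp x)))"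
  define F where "F = (\<lambda>y. inv R y + inv R (Jm (K (Jp (inv R y) + G (K (Jp (inv R y)))))))"
  interpret R: bounded_linear R using R(2) by (rule bounded_clinear_imp_bounded_linear)
  interpret Jp: bounded_linear Jp using bounded(1) by (rule bounded_clinear_imp_bounded_linear)
  interpret Jm: bounded_linear Jm using bounded(2) by (rule bounded_clinear_imp_bounded_linear)
  interpret K: bounded_linear K using bounded(3) by (rule bounded_clinear_imp_bounded_linear)
  interpret G: bounded_linear G using bounded(4) by (rule bounded_clinear_imp_bounded_linear)
  have "bij R" and Ri: "bounded_clinear (inv R)"
    using R(1) by (auto simp: has_bounded_inverse_def)
  then have R_inv: "R (inv R y) = y" and inv_R: "inv R (R x) = x" for x y
    by (simp_all add: bij_is_surj surj_f_inv_f bij_is_inj)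
  have "inj S"
  proof (rule injI)
    fix x y assume "S x = S y"
    then have "R (x - y) = Jm (0 + K (Jp (x - y)))"
      by (simp add: S_def R.diff Jp.diff K.diff Jm.diff algebra_simps)
    then have "Jp (x - y) = 0"
      using G_iff G.zero by metis
    then have "R (x - y) = 0"
      using \<open>R (x - y) = _\<close> by (simp add: K.zero Jm.zero)
    then show "x = y"
      using inv_R R.zero by (metis eq_iff_diff_eq_0)
  qed
  moreover have "S (F y) = y" for y
  proof -
    define v where "v = K (Jp (inv R y))"
    obtain p where p: "G v = Jp p"
      using G_range by blast
    then have Rp: "R p = Jm (v + K (Jp p))"
      using G_iff by blast
    have "inv R (Jm (K (Jp (inv R y) + G v))) = p"
      using Rp inv_R by (metis p v_def K.add)
    then have "F y = inv R y + p"
      by (simp add: F_def v_def)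
    then show "S (F y) = y"
      using Rp by (simp add: S_def v_def R_inv R.add Jp.add K.add Jm.add)
  qed
  moreover have "bounded_clinear F"
    unfolding F_def
    by (intro bounded_clinear_add Ri bounded_clinear_compose[OF Ri]
        bounded_clinear_compose[OF bounded(2)] bounded_clinear_compose[OF bounded(3)]
        bounded_clinear_compose[OF bounded(4)] bounded_clinear_compose[OF bounded(1)])
  ultimately show ?thesis
    unfolding S_def by (rule has_bounded_inverseI)
qed

lemma bullet_op_eq_iff:
  assumes "inj Jp" and "inj Jm"
  shows "Jp p \<in> bullet_dom Jp Jm T \<and> bullet_op Jp Jm T (Jp p) = q \<longleftrightarrow> T p = Jm q"
  using assms by (auto simp: bullet_dom_def bullet_op_def)

lemma resolvent_set_inverseE:
  assumes "z \<in> resolvent_set D S"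
  obtains G where "bounded_clinear G"
    and "\<And>v. G v \<in> D" and "\<And>v. S (G v) - z *\<^sub>C G v = v"
    and "\<And>x. x \<in> D \<Longrightarrow> G (S x - z *\<^sub>C x) = x"
proof
  let ?B = "\<lambda>x. S x - z *\<^sub>C x"
  have bij: "bij_betw ?B D UNIV"
    using assms by (simp add: resolvent_set_def)
  show "bounded_clinear (the_inv_into D ?B)"
    using assms by (simp add: resolvent_set_def)
  show "the_inv_into D ?B v \<in> D" for v
    using bij by (simp add: bij_betw_def the_inv_into_into)
  show "?B (the_inv_into D ?B v) = v" for v
    using f_the_inv_into_f_bij_betw[OF bij] by simp
  show "x \<in> D \<Longrightarrow> the_inv_into D ?B (?B x) = x" for x
    using the_inv_into_f_f[OF bij_betw_imp_inj_on[OF bij]] by simp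
qed

lemma bullet_resolvent_inverse_eq_iff:
  assumes "inj Jp" and "inj Jm"
    and G_dom: "\<And>v. G v \<in> bullet_dom Jp Jm T"
    and G_right: "\<And>v. bullet_op Jp Jm T (G v) - z *\<^sub>C G v = v"
    and G_left: "\<And>x. x \<in> bullet_dom Jp Jm T \<Longrightarrow> G (bullet_op Jp Jm T x - z *\<^sub>C x) = x"
  shows "G v = Jp p \<longleftrightarrow> T p = Jm (v + z *\<^sub>C Jp p)"
proof
  assume "G v = Jp p"
  then have "Jp p \<in> bullet_dom Jp Jm T \<and> bullet_op Jp Jm T (Jp p) = v + z *\<^sub>C Jp p"
    using G_dom[of v] G_right[of v] by (auto simp: algebra_simps)
  then show "T p = Jm (v + z *\<^sub>C Jp p)"
    using bullet_op_eq_iff[OF assms(1,2)] by blast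
next
  assume "T p = Jm (v + z *\<^sub>C Jp p)"
  then have "Jp p \<in> bullet_dom Jp Jm T \<and> bullet_op Jp Jm T (Jp p) = v + z *\<^sub>C Jp p"
    using bullet_op_eq_iff[OF assms(1,2)] by blast
  then show "G v = Jp p"
    using G_left[of "Jp p"] by simp
qed

theorem mainTheorem3:
  fixes Jp :: "'p::{complex_normed_vector,banach} \<Rightarrow> 'b::{complex_normed_vector,banach}"
    and Jm :: "'b \<Rightarrow> 'm::{complex_normed_vector,banach}"
    and T :: "'p \<Rightarrow> 'm"
    and A :: "'b \<Rightarrow> 'b"
    and z :: complex
  assumes Jp: "bounded_clinear Jp" "inj Jp" "closure (range Jp) = UNIV"
    and Jm: "bounded_clinear Jm" "inj Jm" "closure (range Jm) = UNIV"
    and T: "bounded_clinear T"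
    and A: "bounded_clinear A"
    and inv_A: "has_bounded_inverse (\<lambda>x. T x - Jm (A (Jp x)))"
    and lam: "z \<in> resolvent_set (bullet_dom Jp Jm T) (bullet_op Jp Jm T)"
  shows "has_bounded_inverse (\<lambda>x. T x - z *\<^sub>C Jm (Jp x))"
proof -
  interpret Jm: bounded_linear Jm using Jm(1) by (rule bounded_clinear_imp_bounded_linear)
  let ?R = "\<lambda>x. T x - Jm (A (Jp x))" and ?K = "\<lambda>x. z *\<^sub>C x - A x"
  obtain G where G: "bounded_clinear G" and G_dom: "\<And>v. G v \<in> bullet_dom Jp Jm T"
    and G_right: "\<And>v. bullet_op Jp Jm T (G v) - z *\<^sub>C G v = v"
    and G_left: "\<And>x. x \<in> bullet_dom Jp Jm T \<Longrightarrow> G (bullet_op Jp Jm T x - z *\<^sub>C x) = x"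
    using resolvent_set_inverseE[OF lam] by blast
  have "G v = Jp p \<longleftrightarrow> T p = Jm (v + z *\<^sub>C Jp p)" for v p
    using bullet_resolvent_inverse_eq_iff[OF Jp(2) Jm(2) G_dom G_right G_left] .
  then have "G v = Jp p \<longleftrightarrow> ?R p = Jm (v + ?K (Jp p))" for v p
    by (auto simp: Jm.add Jm.diff algebra_simps)
  moreover have "G v \<in> range Jp" for v
    using G_dom by (auto simp: bullet_dom_def)
  moreover have "bounded_clinear ?R" and "bounded_clinear ?K"
    by (intro bounded_clinear_diff T A bounded_clinear_compose[OF Jm(1)]
        bounded_clinear_compose[OF A] Jp(1) bounded_clinear_scaleC bounded_clinear_ident)+
  ultimately have "has_bounded_inverse (\<lambda>x. ?R x - Jm (?K (Jp x)))"
    using has_bounded_inverse_diff_factored[OF inv_A _ Jp(1) Jm(1) _ G] by blast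
  moreover have "?R x - Jm (?K (Jp x)) = T x - z *\<^sub>C Jm (Jp x)" for x
    using bounded_clinear_scaleC_commute[OF Jm(1)] by (simp add: Jm.diff)
  ultimately show ?thesis
    by simp
qed

end
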